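(* Let $d\in\mathbb N$ and $\varepsilon\in(0,1)$, let $h=h(d,\varepsilon)$ be the height and $\mathcal P^d_\varepsilon$ the set of leaves of Thiémard's decomposition process (see context), and let $f:[0,1)\to[1,\infty)$ be $$f(x)=1+\sum_{k=1}^\infty\frac{(k-\frac1d)(k-1-\frac1d)\cdots(1-\frac1d)}{(k+1)!}\,x^k .$$ Then $$h\le\left\lceil\frac{d(\varepsilon^{-1}-1)}{f(\varepsilon)}\right\rceil\qquad\text{and in particular}\qquad h\le\left\lceil\frac{d(\varepsilon^{-1}-1)}{1+\frac{d-1}{2d}\varepsilon}\right\rceil .$$ Furthermore, if $d=2$, $$|\mathcal P^2_\varepsilon|\le 2\Big(\frac{\varepsilon^{-1}-1}{f(\varepsilon)}+\frac32\Big)\Big(\frac{\varepsilon^{-1}-1}{f(\varepsilon)}+1\Big),$$ and if $d\ge3$, $$|\mathcal P^d_\varepsilon|\le\frac{d^d}{d!}\Big(\frac{\varepsilon^{-1}-1}{f(\varepsilon)}+\frac12\Big(1+\frac3d\Big)\Big)^d .$$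
   Context: Fix $d\in\mathbb N$ and $\varepsilon\in(0,1]$. For $x,y\in[0,1]^d$ write $[x,y)=\prod_{i=1}^d[x_i,y_i)$ and define the weight $W([x,y))=\prod_{i=1}^d y_i-\prod_{i=1}^d x_i$. Thiémard's decomposition process generates boxes, each with a type in $\{1,\dots,d+1\}$. It starts with $I^d=[0,1)^d=[(0,\dots,0),(1,\dots,1))$, of type $1$. Whenever a generated box $P=[\alpha,\beta)$ has type $j\le d$ and $W(P)>\varepsilon$, it is decomposed (procedure DECOMPOSE$(P,j)$) as follows: put $$\delta^P=\left(\frac{\prod_{i=1}^d\beta_i-\varepsilon}{\prod_{i=1}^{j-1}\alpha_i\prod_{i=j}^d\beta_i}\right)^{1/(d-j+1)},\qquad \gamma^P_i=\alpha_i\ (i<j),\quad \gamma^P_i=\delta^P\beta_i\ (i\ge j).$$ The children of $P$ are the boxes $Q^P_k=[a^{(k)},b^{(k)})$ for $k=j,\dots,d$, where $a^{(k)}_i=\gamma^P_i$ for $i<k$, $a^{(k)}_i=\alpha_i$ for $i\ge k$, $b^{(k)}_k=\gamma^P_k$, $b^{(k)}_i=\beta_i$ for $i\neq k$; the box $Q^P_k$ has type $k$. In addition $P$ has the child $Q^P_{d+1}=[\gamma^P,\beta)$ of type $d+1$. A generated box of type $d+1$ or of weight at most $\varepsilon$ is not decomposed. (Known facts from Thiémard: $\delta^P\in(0,1)$; the process terminates after finitely many steps; $W(Q^P_{d+1})=\varepsilon$ and $W(Q^P_k)=\delta^PW(P)$ for $j\le k\le d$.) $\mathcal P^d_\varepsilon$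 denotes the set of all generated boxes that are not decomposed (the leaves of the process). Indexing: for $r\in\mathbb N$ let $S^r=\{\boldsymbol i\in\mathbb N^r: 1\le i_1\le\dots\le i_r\le d\}$, $S^0=\{0\}$. Put $Q^{(0)}_0=I^d$, $Q^{(1)}_{j_1}=Q^{I^d}_{j_1}$ ($j_1=1,\dots,d$, defined when $W(I^d)>\varepsilon$), and for $\boldsymbol j\in S^r$ with $Q^{(r)}_{\boldsymbol j}$ generated and $W(Q^{(r)}_{\boldsymbol j})>\varepsilon$, $Q^{(r+1)}_{(\boldsymbol j,j_{r+1})}=Q^{Q^{(r)}_{\boldsymbol j}}_{j_{r+1}}$ for $j_{r+1}=j_r,\dots,d$. The height $h=h(d,\varepsilon)$ of the partition is $0$ if $W(I^d)\le\varepsilon$, and otherwise the largest $h\in\mathbb N$ such that there is $\boldsymbol j\in S^{h-1}$ with $Q^{(h-1)}_{\boldsymbol j}$ generated and $W(Q^{(h-1)}_{\boldsymbol j})>\varepsilon$. *)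

theory Defs
  imports "HOL-Analysis.Analysis"
begin

text \<open>Points of [0,1]^d are represented as functions nat \<Rightarrow> real; only the
coordinates 1..d are relevant.\<close>

definition tbox :: "nat \<Rightarrow> (nat \<Rightarrow> real) \<Rightarrow> (nat \<Rightarrow> real) \<Rightarrow> (nat \<Rightarrow> real) set" where
  "tbox d x y = {z. \<forall>i\<in>{1..d}. x i \<le> z i \<and> z i < y i}"

definition tweight :: "nat \<Rightarrow> (nat \<Rightarrow> real) \<Rightarrow> (nat \<Rightarrow> real) \<Rightarrow> real" where
  "tweight d x y = (\<Prod>i\<in>{1..d}. y i) - (\<Prod>i\<in>{1..d}. x i)"

definition tdelta :: "nat \<Rightarrow> real \<Rightarrow> (nat \<Rightarrow> real) \<Rightarrow> (nat \<Rightarrow> real) \<Rightarrow> nat \<Rightarrow> real" where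
  "tdelta d \<epsilon> \<alpha> \<beta> j =
     (((\<Prod>i\<in>{1..d}. \<beta> i) - \<epsilon>) /
      ((\<Prod>i\<in>{1..<j}. \<alpha> i) * (\<Prod>i\<in>{j..d}. \<beta> i))) powr (1 / real (d - j + 1))"

definition tgamma :: "nat \<Rightarrow> real \<Rightarrow> (nat \<Rightarrow> real) \<Rightarrow> (nat \<Rightarrow> real) \<Rightarrow> nat \<Rightarrow> nat \<Rightarrow> real" where
  "tgamma d \<epsilon> \<alpha> \<beta> j i = (if i < j then \<alpha> i else tdelta d \<epsilon> \<alpha> \<beta> j * \<beta> i)"

definition tchild_a :: "nat \<Rightarrow> real \<Rightarrow> (nat \<Rightarrow> real) \<Rightarrow> (nat \<Rightarrow> real) \<Rightarrow> nat \<Rightarrow> nat \<Rightarrow> nat \<Rightarrow> real" where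
  "tchild_a d \<epsilon> \<alpha> \<beta> j k i = (if i < k then tgamma d \<epsilon> \<alpha> \<beta> j i else \<alpha> i)"

definition tchild_b :: "nat \<Rightarrow> real \<Rightarrow> (nat \<Rightarrow> real) \<Rightarrow> (nat \<Rightarrow> real) \<Rightarrow> nat \<Rightarrow> nat \<Rightarrow> nat \<Rightarrow> real" where
  "tchild_b d \<epsilon> \<alpha> \<beta> j k i = (if i = k then tgamma d \<epsilon> \<alpha> \<beta> j i else \<beta> i)"

text \<open>thiemard_gen d eps r alpha beta j: the box [alpha,beta) of type j is generated
at depth r of Thiemard's decomposition process.\<close>
inductive thiemard_gen :: "nat \<Rightarrow> real \<Rightarrow> nat \<Rightarrow> (nat \<Rightarrow> real) \<Rightarrow> (nat \<Rightarrow> real) \<Rightarrow> nat \<Rightarrow> bool"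
  for d :: nat and \<epsilon> :: real where
  root: "thiemard_gen d \<epsilon> 0 (\<lambda>_. 0) (\<lambda>_. 1) 1"
| child: "thiemard_gen d \<epsilon> r \<alpha> \<beta> j \<Longrightarrow> j \<le> d \<Longrightarrow> tweight d \<alpha> \<beta> > \<epsilon> \<Longrightarrow>
          j \<le> k \<Longrightarrow> k \<le> d \<Longrightarrow>
          thiemard_gen d \<epsilon> (Suc r) (tchild_a d \<epsilon> \<alpha> \<beta> j k) (tchild_b d \<epsilon> \<alpha> \<beta> j k) k"
| last: "thiemard_gen d \<epsilon> r \<alpha> \<beta> j \<Longrightarrow> j \<le> d \<Longrightarrow> tweight d \<alpha> \<beta> > \<epsilon> \<Longrightarrow>
          thiemard_gen d \<epsilon> (Suc r) (tgamma d \<epsilon> \<alpha> \<beta> j) \<beta> (Suc d)"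

definition thiemard_leaves :: "nat \<Rightarrow> real \<Rightarrow> (nat \<Rightarrow> real) set set" where
  "thiemard_leaves d \<epsilon> =
     {tbox d \<alpha> \<beta> | \<alpha> \<beta>. \<exists>r j. thiemard_gen d \<epsilon> r \<alpha> \<beta> j \<and>
                              (j = Suc d \<or> tweight d \<alpha> \<beta> \<le> \<epsilon>)}"

definition thiemard_height :: "nat \<Rightarrow> real \<Rightarrow> nat" where
  "thiemard_height d \<epsilon> =
     (if tweight d (\<lambda>_. 0) (\<lambda>_. 1) \<le> \<epsilon> then 0
      else (GREATEST h. h \<ge> 1 \<and> (\<exists>\<alpha> \<beta> j. j \<le> d \<and> thiemard_gen d \<epsilon> (h - 1) \<alpha> \<beta> j \<and>
                                           tweight d \<alpha> \<beta> > \<epsilon>)))"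

definition thiemard_f :: "nat \<Rightarrow> real \<Rightarrow> real" where
  "thiemard_f d x = 1 + (\<Sum>n. (\<Prod>i\<in>{1..Suc n}. (real i - 1 / real d)) / fact (Suc n + 1) * x ^ Suc n)"

end

theory Submission
  imports Defs "HOL-Library.Multiset"
begin

(*
  A box [\<alpha>,\<beta>) of type j \<le> d generated at depth r has \<alpha>_j = ... = \<alpha>_d = 0, so its weight is the
  anchored volume \<Prod>\<beta>_i.  Writing \<theta> for the factor \<delta> of its parent, it also satisfies
  \<alpha>_i \<ge> \<theta> \<beta>_i for i < j and W - \<epsilon> \<le> \<theta>^(d-j+1) \<Prod>_{i<j} \<alpha>_i \<Prod>_{i\<ge>j} \<beta>_i.  Hence its own
  factor satisfies \<delta> \<le> \<theta> and \<delta>^d W \<le> W - \<epsilon>, which forces (1 - \<delta>) W \<ge> 1 - (1 - \<epsilon>)^(1/d):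
  every generation loses at least c = 1 - (1 - \<epsilon>)^(1/d) of anchored volume, so the height is
  less than (1 - \<epsilon>)/c + 1.  By the binomial series, d c = \<epsilon> f(\<epsilon>), which turns this into the
  stated bound.  A leaf is determined by the nondecreasing sequence of types along its path,
  padded with d + 1 to length h, i.e. by a multiset of size h over {1..d+1}; so there are at
  most C(h + d, d) leaves, and C(h + d, d) is estimated by pairing its factors (AM-GM).
*)

section \<open>The series f\<close>

lemma gbinomial_Suc_Suc_times_power:
  fixes a x :: real
  shows "(a gchoose Suc (Suc n)) * (- x) ^ Suc (Suc n)
       = - (a * x) * ((\<Prod>i\<in>{1..Suc n}. real i - a) / fact (Suc n + 1) * x ^ Suc n)"
proof -
  have "{0..<Suc (Suc n)} = insert 0 {1..Suc n}" by auto
  then have "(\<Prod>i = 0..<Suc (Suc n). a - of_nat i) = a * (\<Prod>i\<in>{1..Suc n}. a - real i)"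
    by simp
  also have "(\<Prod>i\<in>{1..Suc n}. a - real i) = (-1) ^ Suc n * (\<Prod>i\<in>{1..Suc n}. real i - a)"
    using prod_uminus[of "\<lambda>i. real i - a" "{1..Suc n}"] by simp
  finally have "(a gchoose Suc (Suc n))
      = a * ((-1) ^ Suc n * (\<Prod>i\<in>{1..Suc n}. real i - a)) / fact (Suc n + 1)"
    by (simp add: gbinomial_prod_rev)
  moreover have "(- x) ^ Suc (Suc n) = (-1) ^ Suc n * (-1) * (x ^ Suc n * x)"
    by (metis mult.commute power_Suc power_minus)
  moreover have "((-1::real) ^ Suc n) * (-1) ^ Suc n = 1"
    by (simp flip: power_mult_distrib)
  moreover have "a * (s * P) / F * (s * (-1) * (E * x)) = - (a * x) * (P / F * E)"
    if "s * s = 1" for s P F E :: real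
    using that by (simp add: field_simps)
  ultimately show ?thesis
    by (simp only:)
qed

lemma binomial_series_tail_sums:
  fixes a x :: real
  assumes "a \<noteq> 0" "x \<noteq> 0" "\<bar>x\<bar> < 1"
  shows "(\<lambda>n. (\<Prod>i\<in>{1..Suc n}. real i - a) / fact (Suc n + 1) * x ^ Suc n)
           sums ((1 - (1 - x) powr a) / (a * x) - 1)"
proof -
  define t where "t n = (\<Prod>i\<in>{1..Suc n}. real i - a) / fact (Suc n + 1) * x ^ Suc n" for n
  define g where "g n = (a gchoose n) * (- x) ^ n" for n
  have "g sums (1 - x) powr a"
    unfolding g_def using gen_binomial_real[of "- x" a] assms by simp
  then have "(\<lambda>n. g (Suc (Suc n))) sums ((1 - x) powr a - g 0 - g 1)"
    using sums_Suc_iff[of g] sums_Suc_iff[of "\<lambda>n. g (Suc n)"] by simp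
  moreover have "g 0 = 1" "g 1 = - (a * x)" "g (Suc (Suc n)) = - (a * x) * t n" for n
    unfolding g_def t_def by (simp_all only: gbinomial_Suc_Suc_times_power) simp_all
  ultimately have "(\<lambda>n. - (a * x) * t n) sums ((1 - x) powr a - 1 + a * x)"
    by simp
  then have "(\<lambda>n. - (a * x) * t n / - (a * x)) sums (((1 - x) powr a - 1 + a * x) / - (a * x))"
    by (rule sums_divide)
  moreover have "((1 - x) powr a - 1 + a * x) / - (a * x) = (1 - (1 - x) powr a) / (a * x) - 1"
    using assms by (simp add: field_simps)
  ultimately show ?thesis
    using assms by (simp add: t_def[abs_def])
qed

lemma thiemard_f_eq:
  assumes "d \<ge> 1" "0 < \<epsilon>" "\<epsilon> < 1"
  shows "thiemard_f d \<epsilon> = real d * (1 - (1 - \<epsilon>) powr (1 / real d)) / \<epsilon>"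
  using sums_unique[OF binomial_series_tail_sums[of "1 / real d" \<epsilon>]] assms
  by (simp add: thiemard_f_def field_simps)

lemma thiemard_f_ge:
  assumes "d \<ge> 1" "0 < \<epsilon>" "\<epsilon> < 1"
  shows "1 + (real d - 1) / (2 * real d) * \<epsilon> \<le> thiemard_f d \<epsilon>"
proof -
  define t where "t = (\<lambda>n. (\<Prod>i\<in>{1..Suc n}. real i - 1 / real d) / fact (Suc n + 1) * \<epsilon> ^ Suc n)"
  have "1 / real d \<le> 1"
    using assms by simp
  then have "0 \<le> real i - 1 / real d" if "i \<ge> 1" for i
    using that by (simp add: order_trans[of _ 1])
  then have "0 \<le> t n" for n
    unfolding t_def using assms by (intro mult_nonneg_nonneg divide_nonneg_pos prod_nonneg) auto
  moreover have "summable t"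
    unfolding t_def using binomial_series_tail_sums[of "1 / real d" \<epsilon>] assms by (auto simp: sums_iff)
  ultimately have "t 0 \<le> suminf t"
    using sum_le_suminf[of t "{0}"] by simp
  moreover have "t 0 = (real d - 1) / (2 * real d) * \<epsilon>"
    using assms by (simp add: t_def field_simps numeral_2_eq_2)
  moreover have "thiemard_f d \<epsilon> = 1 + suminf t"
    by (simp only: thiemard_f_def t_def)
  ultimately show ?thesis
    by simp
qed

section \<open>Shrinking of the anchored volume\<close>

definition anchored_volume :: "nat \<Rightarrow> (nat \<Rightarrow> real) \<Rightarrow> real" where
  "anchored_volume d \<beta> = (\<Prod>i\<in>{1..d}. \<beta> i)"

definition mixed_volume :: "nat \<Rightarrow> (nat \<Rightarrow> real) \<Rightarrow> (nat \<Rightarrow> real) \<Rightarrow> nat \<Rightarrow> real" where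
  "mixed_volume d \<alpha> \<beta> j = (\<Prod>i\<in>{1..d}. if i < j then \<alpha> i else \<beta> i)"

lemma prod_if_mem_const:
  fixes x :: "'a::comm_monoid_mult"
  assumes "A \<subseteq> S" "finite S"
  shows "(\<Prod>i\<in>S. if i \<in> A then x else 1) = x ^ card A"
proof -
  have "(\<Prod>i\<in>S. if i \<in> A then x else 1) = (\<Prod>i\<in>S \<inter> A. x)"
    by (rule prod.inter_restrict[symmetric]) fact
  also have "S \<inter> A = A"
    using assms by auto
  finally show ?thesis
    by simp
qed

lemma tweight_eq_anchored_volume:
  assumes "1 \<le> j" "j \<le> d" "\<forall>i\<in>{j..d}. \<alpha> i = 0"
  shows "tweight d \<alpha> \<beta> = anchored_volume d \<beta>"
proof -
  have "(\<Prod>i\<in>{1..d}. \<alpha> i) = 0"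
    using assms by (intro prod_zero bexI[of _ d]) auto
  then show ?thesis
    by (simp add: tweight_def anchored_volume_def)
qed

lemma tdelta_eq:
  assumes "1 \<le> j" "j \<le> d"
  shows "tdelta d \<epsilon> \<alpha> \<beta> j
           = ((anchored_volume d \<beta> - \<epsilon>) / mixed_volume d \<alpha> \<beta> j) powr (1 / real (d - j + 1))"
proof -
  have split: "{1..d} = {1..<j} \<union> {j..d}"
    using assms by auto
  have "mixed_volume d \<alpha> \<beta> j
      = (\<Prod>i\<in>{1..<j}. if i < j then \<alpha> i else \<beta> i) * (\<Prod>i\<in>{j..d}. if i < j then \<alpha> i else \<beta> i)"
    unfolding mixed_volume_def split by (rule prod.union_disjoint) auto
  also have "\<dots> = (\<Prod>i\<in>{1..<j}. \<alpha> i) * (\<Prod>i\<in>{j..d}. \<beta> i)"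
    by (intro arg_cong2[where f = "(*)"] prod.cong) auto
  finally show ?thesis
    by (simp add: tdelta_def anchored_volume_def)
qed

lemma mixed_volume_ge:
  assumes "0 < \<theta>" "\<forall>i\<in>{1..d}. 0 < \<beta> i" "\<forall>i\<in>{1..<j}. \<theta> * \<beta> i \<le> \<alpha> i" "j \<le> Suc d"
  shows "\<theta> ^ (j - 1) * anchored_volume d \<beta> \<le> mixed_volume d \<alpha> \<beta> j"
proof -
  have "\<theta> ^ (j - 1) * anchored_volume d \<beta> = (\<Prod>i\<in>{1..d}. (if i \<in> {1..<j} then \<theta> else 1) * \<beta> i)"
    unfolding prod.distrib anchored_volume_def using assms by (subst prod_if_mem_const) auto
  also have "\<dots> \<le> mixed_volume d \<alpha> \<beta> j"
    unfolding mixed_volume_def using assms by (intro prod_mono) (auto simp: less_imp_le)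
  finally show ?thesis .
qed

text \<open>Compare x with v = (1 - \<epsilon>)^(1/d) via 1 - y^d = (1 - y)(1 + y + ... + y^(d-1)).\<close>
lemma one_minus_root_le:
  fixes B \<epsilon> x :: real
  assumes "d \<ge> 1" "0 < \<epsilon>" "\<epsilon> < 1" "0 \<le> x" "0 < B" "B \<le> 1" "x ^ d * B \<le> B - \<epsilon>"
  shows "1 - (1 - \<epsilon>) powr (1 / real d) \<le> (1 - x) * B"
proof -
  define v where "v = (1 - \<epsilon>) powr (1 / real d)"
  have "0 < v"
    using assms by (simp add: v_def)
  have vd: "v ^ d = 1 - \<epsilon>"
    using assms by (simp add: v_def powr_power)
  have "x ^ d \<le> 1 - \<epsilon> / B"
    using assms by (simp add: field_simps)
  also have "\<dots> \<le> 1 - \<epsilon>"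
    using assms by (simp add: field_simps mult_left_le)
  finally have "x \<le> v"
    using vd \<open>0 < v\<close> assms power_le_imp_le_base[of x "d - 1" v] by simp
  have "v < 1"
    unfolding v_def using assms powr01_less_one[of "1 - \<epsilon>" "1 / real d"] by simp
  define S where "S y = (\<Sum>i<d. y ^ i)" for y :: real
  have "0 < S v"
    unfolding S_def using assms \<open>0 < v\<close> by (intro sum_pos) (auto simp: lessThan_empty_iff)
  have "(1 - v) * S v = \<epsilon>"
    using vd one_diff_power_eq[of v d] by (simp add: S_def)
  also have "\<epsilon> \<le> B * (1 - x ^ d)"
    using assms by (simp add: algebra_simps)
  also have "\<dots> = B * (1 - x) * S x"
    using one_diff_power_eq[of x d] by (simp add: S_def)
  also have "\<dots> \<le> B * (1 - x) * S v"
    unfolding S_def using assms \<open>x \<le> v\<close> \<open>v < 1\<close> by (intro mult_left_mono sum_mono power_mono) auto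
  finally show ?thesis
    using \<open>0 < S v\<close> by (simp add: v_def mult.commute)
qed

lemma tdelta_power_mixed_volume:
  assumes "1 \<le> j" "j \<le> d" "0 < mixed_volume d \<alpha> \<beta> j" "\<epsilon> < anchored_volume d \<beta>"
  shows "0 < tdelta d \<epsilon> \<alpha> \<beta> j"
    and "tdelta d \<epsilon> \<alpha> \<beta> j ^ (d - j + 1) * mixed_volume d \<alpha> \<beta> j = anchored_volume d \<beta> - \<epsilon>"
proof -
  define q where "q = (anchored_volume d \<beta> - \<epsilon>) / mixed_volume d \<alpha> \<beta> j"
  have "0 < q"
    using assms by (simp add: q_def)
  then show "0 < tdelta d \<epsilon> \<alpha> \<beta> j"
    using assms by (simp add: tdelta_eq q_def[symmetric])
  have "(q powr (1 / real m)) ^ m = q" if "m > 0" for m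
    using \<open>0 < q\<close> that by (simp add: powr_power)
  then have "tdelta d \<epsilon> \<alpha> \<beta> j ^ (d - j + 1) = q"
    using assms by (simp only: tdelta_eq q_def[symmetric])
  then show "tdelta d \<epsilon> \<alpha> \<beta> j ^ (d - j + 1) * mixed_volume d \<alpha> \<beta> j = anchored_volume d \<beta> - \<epsilon>"
    using assms by (simp add: q_def)
qed

lemma tdelta_bounds:
  assumes d: "d \<ge> 1" and \<epsilon>: "0 < \<epsilon>" "\<epsilon> < 1" and j: "1 \<le> j" "j \<le> d"
    and \<beta>: "\<forall>i\<in>{1..d}. 0 < \<beta> i"
    and \<theta>: "0 < \<theta>" "\<theta> \<le> 1" "\<forall>i\<in>{1..<j}. \<theta> * \<beta> i \<le> \<alpha> i"
    and shrink: "anchored_volume d \<beta> - \<epsilon> \<le> \<theta> ^ (d - j + 1) * mixed_volume d \<alpha> \<beta> j"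
    and B: "\<epsilon> < anchored_volume d \<beta>" "anchored_volume d \<beta> \<le> 1"
  shows "0 < tdelta d \<epsilon> \<alpha> \<beta> j" "tdelta d \<epsilon> \<alpha> \<beta> j \<le> \<theta>"
    and "tdelta d \<epsilon> \<alpha> \<beta> j ^ (d - j + 1) * mixed_volume d \<alpha> \<beta> j = anchored_volume d \<beta> - \<epsilon>"
    and "1 - (1 - \<epsilon>) powr (1 / real d) \<le> (1 - tdelta d \<epsilon> \<alpha> \<beta> j) * anchored_volume d \<beta>"
proof -
  define m where "m = d - j + 1"
  define C where "C = mixed_volume d \<alpha> \<beta> j"
  define B where "B = anchored_volume d \<beta>"
  define \<delta> where "\<delta> = tdelta d \<epsilon> \<alpha> \<beta> j"
  have CB: "\<theta> ^ (j - 1) * B \<le> C"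
    unfolding B_def C_def using \<theta> \<beta> j by (intro mixed_volume_ge) auto
  moreover have "0 < \<theta> ^ (j - 1) * B"
    using \<theta> B \<epsilon> by (simp add: B_def)
  ultimately have "0 < C"
    by linarith
  then have "0 < \<delta>" and \<delta>C: "\<delta> ^ m * C = B - \<epsilon>"
    using tdelta_power_mixed_volume[OF j] B by (simp_all add: \<delta>_def C_def B_def m_def)
  then show "0 < tdelta d \<epsilon> \<alpha> \<beta> j"
    and "tdelta d \<epsilon> \<alpha> \<beta> j ^ (d - j + 1) * mixed_volume d \<alpha> \<beta> j = anchored_volume d \<beta> - \<epsilon>"
    by (simp_all add: \<delta>_def B_def C_def m_def)
  have "B - \<epsilon> \<le> \<theta> ^ m * C"
    unfolding B_def C_def m_def using shrink .
  then have "\<delta> ^ m \<le> \<theta> ^ m"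
    using \<delta>C \<open>0 < C\<close> mult_le_cancel_right_pos[of C "\<delta> ^ m" "\<theta> ^ m"] by linarith
  then have "\<delta> \<le> \<theta>"
    using power_le_imp_le_base[of \<delta> "m - 1" \<theta>] \<theta> by (simp add: m_def)
  then show "tdelta d \<epsilon> \<alpha> \<beta> j \<le> \<theta>"
    by (simp add: \<delta>_def)
  have "d = m + (j - 1)"
    using j by (simp add: m_def)
  then have "\<delta> ^ d * B = \<delta> ^ m * (\<delta> ^ (j - 1) * B)"
    by (metis power_add mult.assoc)
  also have "\<dots> \<le> \<delta> ^ m * (\<theta> ^ (j - 1) * B)"
    using \<open>0 < \<delta>\<close> \<open>\<delta> \<le> \<theta>\<close> B \<epsilon> by (intro mult_left_mono mult_right_mono power_mono) (auto simp: B_def)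
  also have "\<dots> \<le> \<delta> ^ m * C"
    using CB \<open>0 < \<delta>\<close> by (intro mult_left_mono) auto
  finally have "\<delta> ^ d * B \<le> B - \<epsilon>"
    using \<delta>C by simp
  then show "1 - (1 - \<epsilon>) powr (1 / real d) \<le> (1 - tdelta d \<epsilon> \<alpha> \<beta> j) * anchored_volume d \<beta>"
    using one_minus_root_le[OF d \<epsilon>, of \<delta> B] \<open>0 < \<delta>\<close> B \<epsilon> by (simp add: \<delta>_def B_def)
qed

lemma anchored_volume_tchild_b:
  assumes "1 \<le> k" "k \<le> d" "j \<le> k"
  shows "anchored_volume d (tchild_b d \<epsilon> \<alpha> \<beta> j k) = tdelta d \<epsilon> \<alpha> \<beta> j * anchored_volume d \<beta>"
proof -
  have tb: "tchild_b d \<epsilon> \<alpha> \<beta> j k i = (if i \<in> {k} then tdelta d \<epsilon> \<alpha> \<beta> j else 1) * \<beta> i" for i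
    using assms by (simp add: tchild_b_def tgamma_def)
  show ?thesis
    unfolding anchored_volume_def tb prod.distrib using assms by (subst prod_if_mem_const) auto
qed

lemma mixed_volume_tchild:
  assumes "1 \<le> j" "j \<le> k" "k \<le> d"
  shows "mixed_volume d (tchild_a d \<epsilon> \<alpha> \<beta> j k) (tchild_b d \<epsilon> \<alpha> \<beta> j k) k
           = tdelta d \<epsilon> \<alpha> \<beta> j ^ (Suc k - j) * mixed_volume d \<alpha> \<beta> j"
proof -
  have "mixed_volume d (tchild_a d \<epsilon> \<alpha> \<beta> j k) (tchild_b d \<epsilon> \<alpha> \<beta> j k) k
      = (\<Prod>i\<in>{1..d}. (if i \<in> {j..k} then tdelta d \<epsilon> \<alpha> \<beta> j else 1) * (if i < j then \<alpha> i else \<beta> i))"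
    unfolding mixed_volume_def using assms
    by (intro prod.cong) (auto simp: tchild_a_def tchild_b_def tgamma_def)
  also have "\<dots> = tdelta d \<epsilon> \<alpha> \<beta> j ^ (Suc k - j) * mixed_volume d \<alpha> \<beta> j"
    unfolding prod.distrib mixed_volume_def[symmetric] using assms by (subst prod_if_mem_const) auto
  finally show ?thesis .
qed

text \<open>\<theta> is the factor tdelta of the parent box (1 for the root).\<close>
definition gen_invariant :: "nat \<Rightarrow> real \<Rightarrow> nat \<Rightarrow> (nat \<Rightarrow> real) \<Rightarrow> (nat \<Rightarrow> real) \<Rightarrow> nat \<Rightarrow> bool" where
  "gen_invariant d \<epsilon> r \<alpha> \<beta> j \<longleftrightarrow> 1 \<le> j \<and> j \<le> Suc d \<and> (j \<le> d \<longrightarrow>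
     (\<forall>i\<in>{1..d}. 0 < \<beta> i \<and> 0 \<le> \<alpha> i) \<and> (\<forall>i\<in>{j..d}. \<alpha> i = 0) \<and>
     (\<exists>\<theta>. 0 < \<theta> \<and> \<theta> \<le> 1 \<and> (\<forall>i\<in>{1..<j}. \<theta> * \<beta> i \<le> \<alpha> i) \<and>
          anchored_volume d \<beta> - \<epsilon> \<le> \<theta> ^ (d - j + 1) * mixed_volume d \<alpha> \<beta> j) \<and>
     anchored_volume d \<beta> \<le> 1 - real r * (1 - (1 - \<epsilon>) powr (1 / real d)))"

lemma tchild_corners:
  fixes d j k :: nat and \<epsilon> :: real and \<alpha> \<beta> :: "nat \<Rightarrow> real"
  defines "\<delta> \<equiv> tdelta d \<epsilon> \<alpha> \<beta> j"
  assumes k: "j \<le> k" "k \<le> d" and "0 < \<delta>" "\<delta> \<le> \<theta>"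
    and \<alpha>: "\<forall>i\<in>{1..d}. 0 \<le> \<alpha> i" "\<forall>i\<in>{j..d}. \<alpha> i = 0"
    and \<beta>: "\<forall>i\<in>{1..d}. 0 < \<beta> i" and \<theta>: "\<forall>i\<in>{1..<j}. \<theta> * \<beta> i \<le> \<alpha> i"
  shows "\<forall>i\<in>{1..<k}. \<delta> * tchild_b d \<epsilon> \<alpha> \<beta> j k i \<le> tchild_a d \<epsilon> \<alpha> \<beta> j k i"
    and "\<forall>i\<in>{1..d}. 0 < tchild_b d \<epsilon> \<alpha> \<beta> j k i \<and> 0 \<le> tchild_a d \<epsilon> \<alpha> \<beta> j k i"
    and "\<forall>i\<in>{k..d}. tchild_a d \<epsilon> \<alpha> \<beta> j k i = 0"
proof -
  show "\<forall>i\<in>{1..<k}. \<delta> * tchild_b d \<epsilon> \<alpha> \<beta> j k i \<le> tchild_a d \<epsilon> \<alpha> \<beta> j k i"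
  proof
    fix i assume i: "i \<in> {1..<k}"
    show "\<delta> * tchild_b d \<epsilon> \<alpha> \<beta> j k i \<le> tchild_a d \<epsilon> \<alpha> \<beta> j k i"
    proof (cases "i < j")
      case True
      then have "\<delta> * \<beta> i \<le> \<theta> * \<beta> i"
        using \<open>\<delta> \<le> \<theta>\<close> \<beta> i k by (intro mult_right_mono) (auto intro: less_imp_le)
      moreover have "\<theta> * \<beta> i \<le> \<alpha> i"
        using \<theta> i True by auto
      ultimately
      show ?thesis
        using True i by (simp add: tchild_a_def tchild_b_def tgamma_def)
    next
      case False
      with i show ?thesis
        by (simp add: tchild_a_def tchild_b_def tgamma_def \<delta>_def)
    qed
  qed
  show "\<forall>i\<in>{1..d}. 0 < tchild_b d \<epsilon> \<alpha> \<beta> j k i \<and> 0 \<le> tchild_a d \<epsilon> \<alpha> \<beta> j k i"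
    using \<alpha> \<beta> \<open>0 < \<delta>\<close> k by (auto simp: tchild_a_def tchild_b_def tgamma_def \<delta>_def less_imp_le)
  show "\<forall>i\<in>{k..d}. tchild_a d \<epsilon> \<alpha> \<beta> j k i = 0"
    using \<alpha> k by (auto simp: tchild_a_def)
qed

lemma tchild_volume_gap_le:
  fixes d j k :: nat and \<epsilon> :: real and \<alpha> \<beta> :: "nat \<Rightarrow> real"
  defines "\<delta> \<equiv> tdelta d \<epsilon> \<alpha> \<beta> j"
  assumes jk: "1 \<le> j" "j \<le> k" "k \<le> d" and "0 < \<epsilon>" "0 < \<delta>" "\<delta> \<le> 1"
    and gap: "\<delta> ^ (d - j + 1) * mixed_volume d \<alpha> \<beta> j = anchored_volume d \<beta> - \<epsilon>"
  shows "anchored_volume d (tchild_b d \<epsilon> \<alpha> \<beta> j k) - \<epsilon>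
           \<le> \<delta> ^ (d - k + 1) * mixed_volume d (tchild_a d \<epsilon> \<alpha> \<beta> j k) (tchild_b d \<epsilon> \<alpha> \<beta> j k) k"
proof -
  have "anchored_volume d (tchild_b d \<epsilon> \<alpha> \<beta> j k) - \<epsilon> \<le> \<delta> * (anchored_volume d \<beta> - \<epsilon>)"
    using anchored_volume_tchild_b[of k d j] jk \<open>0 < \<epsilon>\<close> \<open>\<delta> \<le> 1\<close> mult_left_le_one_le[of \<epsilon> \<delta>] \<open>0 < \<delta>\<close>
    by (simp add: \<delta>_def algebra_simps)
  also have "\<dots> = \<delta> * (\<delta> ^ (d - j + 1) * mixed_volume d \<alpha> \<beta> j)"
    using gap by simp
  also have "\<dots> = \<delta> ^ (d - k + 1) * \<delta> ^ (Suc k - j) * mixed_volume d \<alpha> \<beta> j"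
  proof -
    have "d - k + 1 + (Suc k - j) = Suc (d - j + 1)"
      using jk by simp
    then show ?thesis
      by (metis power_add power_Suc mult.assoc)
  qed
  also have "\<dots> = \<delta> ^ (d - k + 1) * mixed_volume d (tchild_a d \<epsilon> \<alpha> \<beta> j k) (tchild_b d \<epsilon> \<alpha> \<beta> j k) k"
    using mixed_volume_tchild[OF jk] by (simp add: \<delta>_def)
  finally show ?thesis .
qed

lemma gen_invariant_tchild:
  assumes d: "d \<ge> 1" and \<epsilon>: "0 < \<epsilon>" "\<epsilon> < 1"
    and inv: "gen_invariant d \<epsilon> r \<alpha> \<beta> j" and "j \<le> d" "\<epsilon> < tweight d \<alpha> \<beta>"
    and k: "j \<le> k" "k \<le> d"
  shows "gen_invariant d \<epsilon> (Suc r) (tchild_a d \<epsilon> \<alpha> \<beta> j k) (tchild_b d \<epsilon> \<alpha> \<beta> j k) k"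
proof -
  define c where "c = 1 - (1 - \<epsilon>) powr (1 / real d)"
  define \<delta> where "\<delta> = tdelta d \<epsilon> \<alpha> \<beta> j"
  have "0 \<le> c"
    using \<epsilon> powr_le1[of "1 / real d" "1 - \<epsilon>"] by (simp add: c_def)
  from inv \<open>j \<le> d\<close> have j: "1 \<le> j" and \<beta>: "\<forall>i\<in>{1..d}. 0 < \<beta> i"
    and \<alpha>: "\<forall>i\<in>{1..d}. 0 \<le> \<alpha> i" "\<forall>i\<in>{j..d}. \<alpha> i = 0"
    and B_le: "anchored_volume d \<beta> \<le> 1 - real r * c"
    unfolding gen_invariant_def c_def by auto
  from inv \<open>j \<le> d\<close> obtain \<theta> where \<theta>: "0 < \<theta>" "\<theta> \<le> 1" "\<forall>i\<in>{1..<j}. \<theta> * \<beta> i \<le> \<alpha> i"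
    and shrink: "anchored_volume d \<beta> - \<epsilon> \<le> \<theta> ^ (d - j + 1) * mixed_volume d \<alpha> \<beta> j"
    unfolding gen_invariant_def by blast
  have B_gt: "\<epsilon> < anchored_volume d \<beta>"
    using \<open>\<epsilon> < tweight d \<alpha> \<beta>\<close> tweight_eq_anchored_volume[OF j \<open>j \<le> d\<close> \<alpha>(2)] by simp
  have "anchored_volume d \<beta> \<le> 1"
    using B_le \<open>0 \<le> c\<close> by (smt (verit) mult_nonneg_nonneg of_nat_0_le_iff)
  from tdelta_bounds[OF d \<epsilon> j \<open>j \<le> d\<close> \<beta> \<theta> shrink B_gt this]
  have "0 < \<delta>" "\<delta> \<le> \<theta>" and gap: "\<delta> ^ (d - j + 1) * mixed_volume d \<alpha> \<beta> j = anchored_volume d \<beta> - \<epsilon>"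
    and loss: "c \<le> (1 - \<delta>) * anchored_volume d \<beta>"
    unfolding \<delta>_def c_def by auto
  have "anchored_volume d (tchild_b d \<epsilon> \<alpha> \<beta> j k) \<le> 1 - real (Suc r) * c"
    using anchored_volume_tchild_b[of k d j] j k loss B_le by (simp add: \<delta>_def algebra_simps)
  moreover have "0 < \<delta>" "\<delta> \<le> 1" "1 \<le> k" "k \<le> Suc d"
    using \<open>0 < \<delta>\<close> \<open>\<delta> \<le> \<theta>\<close> \<theta> j k by auto
  moreover have "anchored_volume d (tchild_b d \<epsilon> \<alpha> \<beta> j k) - \<epsilon>
      \<le> \<delta> ^ (d - k + 1) * mixed_volume d (tchild_a d \<epsilon> \<alpha> \<beta> j k) (tchild_b d \<epsilon> \<alpha> \<beta> j k) k"
    using tchild_volume_gap_le[OF j k \<epsilon>(1)] gap \<open>0 < \<delta>\<close> \<open>\<delta> \<le> 1\<close> unfolding \<delta>_def by blast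
  moreover note tchild_corners[OF k \<open>0 < \<delta>\<close>[unfolded \<delta>_def] \<open>\<delta> \<le> \<theta>\<close>[unfolded \<delta>_def] \<alpha> \<beta> \<theta>(3),
      folded \<delta>_def]
  ultimately show ?thesis
    unfolding gen_invariant_def c_def[symmetric] by blast
qed

section \<open>The height\<close>

lemma thiemard_gen_invariant:
  assumes d: "d \<ge> 1" and \<epsilon>: "0 < \<epsilon>" "\<epsilon> < 1" and gen: "thiemard_gen d \<epsilon> r \<alpha> \<beta> j"
  shows "gen_invariant d \<epsilon> r \<alpha> \<beta> j"
  using gen
proof (induction rule: thiemard_gen.induct)
  case root
  have "mixed_volume d (\<lambda>_. 0) (\<lambda>_. 1) 1 = 1" "anchored_volume d (\<lambda>_. 1) = 1"
    by (simp_all add: mixed_volume_def anchored_volume_def)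
  then show ?case
    unfolding gen_invariant_def using d \<epsilon> by (auto intro!: exI[of _ 1])
next
  case (child r \<alpha> \<beta> j k)
  then show ?case
    using gen_invariant_tchild[OF d \<epsilon>] by blast
next
  case (last r \<alpha> \<beta> j)
  then show ?case
    by (simp add: gen_invariant_def)
qed

lemma thiemard_gen_depth_lt:
  assumes d: "d \<ge> 1" and \<epsilon>: "0 < \<epsilon>" "\<epsilon> < 1"
    and "thiemard_gen d \<epsilon> r \<alpha> \<beta> j" "j \<le> d" "\<epsilon> < tweight d \<alpha> \<beta>"
  shows "real r < (1 - \<epsilon>) / (1 - (1 - \<epsilon>) powr (1 / real d))"
proof -
  define c where "c = 1 - (1 - \<epsilon>) powr (1 / real d)"
  have "0 < c"
    using \<epsilon> d powr01_less_one[of "1 - \<epsilon>" "1 / real d"] by (simp add: c_def)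
  from thiemard_gen_invariant[OF d \<epsilon> assms(4)] \<open>j \<le> d\<close>
  have "1 \<le> j" "\<forall>i\<in>{j..d}. \<alpha> i = 0" "anchored_volume d \<beta> \<le> 1 - real r * c"
    unfolding gen_invariant_def c_def by auto
  then have "\<epsilon> < 1 - real r * c"
    using tweight_eq_anchored_volume[of j d \<alpha> \<beta>] \<open>j \<le> d\<close> \<open>\<epsilon> < tweight d \<alpha> \<beta>\<close> by simp
  then show ?thesis
    using \<open>0 < c\<close> by (simp add: c_def[symmetric] field_simps)
qed

definition splits_at_depth :: "nat \<Rightarrow> real \<Rightarrow> nat \<Rightarrow> bool" where
  "splits_at_depth d \<epsilon> r \<longleftrightarrow> (\<exists>\<alpha> \<beta> j. j \<le> d \<and> thiemard_gen d \<epsilon> r \<alpha> \<beta> j \<and> \<epsilon> < tweight d \<alpha> \<beta>)"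

lemma thiemard_gen_Suc_splits_at_depth:
  assumes "thiemard_gen d \<epsilon> (Suc r) \<alpha> \<beta> j"
  shows "splits_at_depth d \<epsilon> r"
  using assms unfolding splits_at_depth_def by cases (blast intro: le_trans)+

lemma thiemard_height_Greatest:
  assumes d: "d \<ge> 1" and \<epsilon>: "0 < \<epsilon>" "\<epsilon> < 1"
  shows "thiemard_height d \<epsilon> = (GREATEST h. h \<ge> 1 \<and> splits_at_depth d \<epsilon> (h - 1))"
    and "thiemard_height d \<epsilon> \<ge> 1 \<and> splits_at_depth d \<epsilon> (thiemard_height d \<epsilon> - 1)"
    and "splits_at_depth d \<epsilon> r \<Longrightarrow> r < thiemard_height d \<epsilon>"
proof -
  define K where "K = (1 - \<epsilon>) / (1 - (1 - \<epsilon>) powr (1 / real d))"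
  have "tweight d (\<lambda>_. 0) (\<lambda>_. 1) = 1"
    using d by (simp add: tweight_def)
  then show height: "thiemard_height d \<epsilon> = (GREATEST h. h \<ge> 1 \<and> splits_at_depth d \<epsilon> (h - 1))"
    using \<epsilon> by (simp add: thiemard_height_def splits_at_depth_def)
  have "\<epsilon> < tweight d (\<lambda>_. 0) (\<lambda>_. 1)"
    using \<open>tweight d (\<lambda>_. 0) (\<lambda>_. 1) = 1\<close> \<epsilon> by simp
  then have root: "(1::nat) \<ge> 1 \<and> splits_at_depth d \<epsilon> (1 - 1)"
    unfolding splits_at_depth_def using d thiemard_gen.root[of d \<epsilon>] by auto
  have bounded: "h \<le> nat \<lceil>K\<rceil> + 1" if "h \<ge> 1 \<and> splits_at_depth d \<epsilon> (h - 1)" for h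
  proof -
    have "real (h - 1) < K"
      using that thiemard_gen_depth_lt[OF d \<epsilon>] unfolding splits_at_depth_def K_def by blast
    then show ?thesis
      using that by linarith
  qed
  show "thiemard_height d \<epsilon> \<ge> 1 \<and> splits_at_depth d \<epsilon> (thiemard_height d \<epsilon> - 1)"
    unfolding height using root bounded by (rule GreatestI_nat)
  show "r < thiemard_height d \<epsilon>" if "splits_at_depth d \<epsilon> r"
    unfolding height using that bounded by (intro Suc_le_lessD Greatest_le_nat[of _ "Suc r"]) auto
qed

lemma thiemard_height_lt:
  assumes d: "d \<ge> 1" and \<epsilon>: "0 < \<epsilon>" "\<epsilon> < 1"
  shows "real (thiemard_height d \<epsilon>) < real d * (1 / \<epsilon> - 1) / thiemard_f d \<epsilon> + 1"
proof -
  define h where "h = thiemard_height d \<epsilon>"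
  have "h \<ge> 1" and "splits_at_depth d \<epsilon> (h - 1)"
    using thiemard_height_Greatest(2)[OF d \<epsilon>] by (simp_all add: h_def)
  then have "real (h - 1) < (1 - \<epsilon>) / (1 - (1 - \<epsilon>) powr (1 / real d))"
    unfolding splits_at_depth_def using thiemard_gen_depth_lt[OF d \<epsilon>] by blast
  also have "\<dots> = real d * (1 / \<epsilon> - 1) / thiemard_f d \<epsilon>"
    using d \<epsilon> powr01_less_one[of "1 - \<epsilon>" "1 / real d"] by (simp add: thiemard_f_eq field_simps)
  finally show ?thesis
    using \<open>h \<ge> 1\<close> by (simp add: h_def of_nat_diff)
qed

lemma thiemard_height_le_ceiling:
  assumes d: "d \<ge> 1" and \<epsilon>: "0 < \<epsilon>" "\<epsilon> < 1"
  shows "int (thiemard_height d \<epsilon>) \<le> \<lceil>real d * (1 / \<epsilon> - 1) / thiemard_f d \<epsilon>\<rceil>"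
    and "int (thiemard_height d \<epsilon>) \<le> \<lceil>real d * (1 / \<epsilon> - 1) / (1 + (real d - 1) / (2 * real d) * \<epsilon>)\<rceil>"
proof -
  show le_f: "int (thiemard_height d \<epsilon>) \<le> \<lceil>real d * (1 / \<epsilon> - 1) / thiemard_f d \<epsilon>\<rceil>"
    using thiemard_height_lt[OF d \<epsilon>] by (simp add: le_ceiling_iff)
  have "0 < 1 + (real d - 1) / (2 * real d) * \<epsilon>"
    using d \<epsilon> by (simp add: add_pos_nonneg)
  then have "real d * (1 / \<epsilon> - 1) / thiemard_f d \<epsilon>
      \<le> real d * (1 / \<epsilon> - 1) / (1 + (real d - 1) / (2 * real d) * \<epsilon>)"
    using thiemard_f_ge[OF d \<epsilon>] \<epsilon> by (intro divide_left_mono mult_pos_pos) auto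
  then show "int (thiemard_height d \<epsilon>) \<le> \<lceil>real d * (1 / \<epsilon> - 1) / (1 + (real d - 1) / (2 * real d) * \<epsilon>)\<rceil>"
    using le_f ceiling_mono by (blast intro: order_trans)
qed

section \<open>Counting the leaves\<close>

definition decompose_step ::
    "nat \<Rightarrow> real \<Rightarrow> nat \<Rightarrow> (nat \<Rightarrow> real) \<times> (nat \<Rightarrow> real) \<times> nat \<Rightarrow> (nat \<Rightarrow> real) \<times> (nat \<Rightarrow> real) \<times> nat" where
  "decompose_step d \<epsilon> k s = (case s of (\<alpha>, \<beta>, j) \<Rightarrow>
     if j \<le> d \<and> \<epsilon> < tweight d \<alpha> \<beta> then
       (if j \<le> k \<and> k \<le> d then (tchild_a d \<epsilon> \<alpha> \<beta> j k, tchild_b d \<epsilon> \<alpha> \<beta> j k, k)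
        else if k = Suc d then (tgamma d \<epsilon> \<alpha> \<beta> j, \<beta>, Suc d) else s)
     else s)"

definition box_of_multiset :: "nat \<Rightarrow> real \<Rightarrow> nat multiset \<Rightarrow> (nat \<Rightarrow> real) set" where
  "box_of_multiset d \<epsilon> M =
     (case fold (decompose_step d \<epsilon>) (sorted_list_of_multiset M) ((\<lambda>_. 0), (\<lambda>_. 1), 1) of
        (\<alpha>, \<beta>, j) \<Rightarrow> tbox d \<alpha> \<beta>)"

lemma thiemard_gen_type_ge_1: "thiemard_gen d \<epsilon> r \<alpha> \<beta> j \<Longrightarrow> 1 \<le> j"
  by (induction rule: thiemard_gen.induct) auto

lemma thiemard_gen_path:
  assumes "thiemard_gen d \<epsilon> r \<alpha> \<beta> j"
  shows "\<exists>xs. length xs = r \<and> sorted xs \<and> set xs \<subseteq> {1..Suc d} \<and> (\<forall>x\<in>set xs. x \<le> j)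
           \<and> fold (decompose_step d \<epsilon>) xs ((\<lambda>_. 0), (\<lambda>_. 1), 1) = (\<alpha>, \<beta>, j)"
  using assms
proof (induction rule: thiemard_gen.induct)
  case root
  show ?case
    by simp
next
  case (child r \<alpha> \<beta> j k)
  then obtain xs where "length xs = r" "sorted xs" "set xs \<subseteq> {1..Suc d}" "\<forall>x\<in>set xs. x \<le> j"
    "fold (decompose_step d \<epsilon>) xs ((\<lambda>_. 0), (\<lambda>_. 1), 1) = (\<alpha>, \<beta>, j)"
    by blast
  moreover have "decompose_step d \<epsilon> k (\<alpha>, \<beta>, j) = (tchild_a d \<epsilon> \<alpha> \<beta> j k, tchild_b d \<epsilon> \<alpha> \<beta> j k, k)"
    using child.hyps by (simp add: decompose_step_def)
  ultimately show ?case
    using child.hyps thiemard_gen_type_ge_1[OF child.hyps(1)]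
    by (intro exI[of _ "xs @ [k]"]) (auto simp: sorted_append)
next
  case (last r \<alpha> \<beta> j)
  then obtain xs where "length xs = r" "sorted xs" "set xs \<subseteq> {1..Suc d}" "\<forall>x\<in>set xs. x \<le> j"
    "fold (decompose_step d \<epsilon>) xs ((\<lambda>_. 0), (\<lambda>_. 1), 1) = (\<alpha>, \<beta>, j)"
    by blast
  moreover have "decompose_step d \<epsilon> (Suc d) (\<alpha>, \<beta>, j) = (tgamma d \<epsilon> \<alpha> \<beta> j, \<beta>, Suc d)"
    using last.hyps by (simp add: decompose_step_def)
  ultimately show ?case
    using last.hyps by (intro exI[of _ "xs @ [Suc d]"]) (auto simp: sorted_append)
qed

lemma fold_decompose_step_leaf:
  assumes "\<not> (j \<le> d \<and> \<epsilon> < tweight d \<alpha> \<beta>)"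
  shows "fold (decompose_step d \<epsilon>) (replicate n k) (\<alpha>, \<beta>, j) = (\<alpha>, \<beta>, j)"
  using assms by (induction n) (auto simp: decompose_step_def)

lemma thiemard_gen_depth_le_height:
  assumes d: "d \<ge> 1" and \<epsilon>: "0 < \<epsilon>" "\<epsilon> < 1" and "thiemard_gen d \<epsilon> r \<alpha> \<beta> j"
  shows "r \<le> thiemard_height d \<epsilon>"
proof (cases r)
  case (Suc r')
  then show ?thesis
    using assms thiemard_gen_Suc_splits_at_depth thiemard_height_Greatest(3)[OF d \<epsilon>] by fastforce
qed simp

lemma thiemard_leaves_subset_image:
  assumes d: "d \<ge> 1" and \<epsilon>: "0 < \<epsilon>" "\<epsilon> < 1"
  shows "thiemard_leaves d \<epsilon> \<subseteq> box_of_multiset d \<epsilon> ` multisets_of_size {1..Suc d} (thiemard_height d \<epsilon>)"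
proof
  fix X assume "X \<in> thiemard_leaves d \<epsilon>"
  then obtain \<alpha> \<beta> r j where X: "X = tbox d \<alpha> \<beta>" and gen: "thiemard_gen d \<epsilon> r \<alpha> \<beta> j"
    and leaf: "j = Suc d \<or> tweight d \<alpha> \<beta> \<le> \<epsilon>"
    unfolding thiemard_leaves_def by blast
  define h where "h = thiemard_height d \<epsilon>"
  obtain xs where xs: "length xs = r" "sorted xs" "set xs \<subseteq> {1..Suc d}" "\<forall>x\<in>set xs. x \<le> j"
    "fold (decompose_step d \<epsilon>) xs ((\<lambda>_. 0), (\<lambda>_. 1), 1) = (\<alpha>, \<beta>, j)"
    using thiemard_gen_path[OF gen] by blast
  have "j \<le> Suc d"
    using thiemard_gen_invariant[OF d \<epsilon> gen] by (simp add: gen_invariant_def)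
  define ys where "ys = xs @ replicate (h - r) (Suc d)"
  have "sorted ys"
    unfolding ys_def using xs \<open>j \<le> Suc d\<close> by (auto simp: sorted_append)
  moreover have "fold (decompose_step d \<epsilon>) ys ((\<lambda>_. 0), (\<lambda>_. 1), 1) = (\<alpha>, \<beta>, j)"
    unfolding ys_def using xs(5) fold_decompose_step_leaf leaf by auto
  ultimately have "box_of_multiset d \<epsilon> (mset ys) = X"
    unfolding box_of_multiset_def by (simp add: sorted_sort_id X)
  moreover have "r \<le> h"
    unfolding h_def using thiemard_gen_depth_le_height[OF d \<epsilon> gen] .
  then have "mset ys \<in> multisets_of_size {1..Suc d} h"
    unfolding multisets_of_size_def ys_def using xs by auto
  ultimately show "X \<in> box_of_multiset d \<epsilon> ` multisets_of_size {1..Suc d} (thiemard_height d \<epsilon>)"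
    unfolding h_def by blast
qed

lemma card_thiemard_leaves_le:
  assumes d: "d \<ge> 1" and \<epsilon>: "0 < \<epsilon>" "\<epsilon> < 1"
  shows "finite (thiemard_leaves d \<epsilon>)"
    and "card (thiemard_leaves d \<epsilon>) \<le> (thiemard_height d \<epsilon> + d) choose d"
proof -
  define M where "M = multisets_of_size {1..Suc d} (thiemard_height d \<epsilon>)"
  have "finite M"
    unfolding M_def by (rule finite_multisets_of_size) simp
  then show "finite (thiemard_leaves d \<epsilon>)"
    using thiemard_leaves_subset_image[OF d \<epsilon>] by (metis M_def finite_imageI finite_subset)
  have "card (thiemard_leaves d \<epsilon>) \<le> card (box_of_multiset d \<epsilon> ` M)"
    using thiemard_leaves_subset_image[OF d \<epsilon>] \<open>finite M\<close> by (intro card_mono) (auto simp: M_def)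
  also have "\<dots> \<le> card M"
    using \<open>finite M\<close> by (rule card_image_le)
  also have "\<dots> = (thiemard_height d \<epsilon> + d) choose d"
    by (simp add: M_def card_multisets_of_size binomial_symmetric[of d] add.commute)
  finally show "card (thiemard_leaves d \<epsilon>) \<le> (thiemard_height d \<epsilon> + d) choose d" .
qed

lemma binomial_eq_prod_div_fact:
  "real ((h + d) choose d) = (\<Prod>i<d. real h + 1 + real i) / fact d"
proof -
  have "real ((h + d) choose d) = pochhammer (real h + 1) d / fact d"
    by (simp add: binomial_gbinomial gbinomial_pochhammer')
  then show ?thesis
    by (simp add: pochhammer_prod atLeast0LessThan)
qed

text \<open>Pairing the i-th factor with the (n-1-i)-th one.\<close>
lemma prod_shifted_le_power:
  fixes a :: real
  assumes "0 \<le> a"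
  shows "(\<Prod>i<n. a + real i) \<le> (a + (real n - 1) / 2) ^ n"
proof -
  define m where "m = a + (real n - 1) / 2"
  have "(\<Prod>i<n. a + real (n - Suc i)) = (\<Prod>i<n. a + real i)"
    by (rule prod.nat_diff_reindex)
  then have "(\<Prod>i<n. a + real i) ^ 2 = (\<Prod>i<n. (a + real i) * (a + real (n - Suc i)))"
    by (simp add: power2_eq_square prod.distrib)
  also have "\<dots> \<le> (\<Prod>i<n. m ^ 2)"
  proof (rule prod_mono)
    fix i assume "i \<in> {..<n}"
    then have "(a + real i) * (a + real (n - Suc i)) = m ^ 2 - ((real n - 1) / 2 - real i) ^ 2"
      by (simp add: m_def of_nat_diff power2_eq_square algebra_simps)
    then have "(a + real i) * (a + real (n - Suc i)) \<le> m ^ 2"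
      by simp
    moreover have "0 \<le> (a + real i) * (a + real (n - Suc i))"
      using assms by simp
    ultimately show "0 \<le> (a + real i) * (a + real (n - Suc i)) \<and> (a + real i) * (a + real (n - Suc i)) \<le> m ^ 2"
      by simp
  qed
  also have "\<dots> = (m ^ n) ^ 2"
    by (simp flip: power_mult) (simp add: mult.commute)
  finally have "(\<Prod>i<n. a + real i) ^ 2 \<le> (m ^ n) ^ 2" .
  moreover have "0 \<le> m \<or> n = 0"
    using assms by (auto simp: m_def)
  ultimately show ?thesis
    unfolding m_def[symmetric] using assms by (metis power2_le_imp_le power_0 zero_le_one zero_le_power)
qed

lemma binomial_two_le:
  fixes H :: real
  assumes "real h < 2 * H + 1"
  shows "real ((h + 2) choose 2) \<le> 2 * (H + 3 / 2) * (H + 1)"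
proof -
  have "(real h + 1) * (real h + 2) \<le> (2 * (H + 1)) * (2 * (H + 3 / 2))"
    using assms by (intro mult_mono) auto
  then show ?thesis
    unfolding binomial_eq_prod_div_fact by (simp add: numeral_2_eq_2 lessThan_Suc algebra_simps)
qed

lemma binomial_le_power:
  fixes H :: real
  assumes "d \<ge> 1" "real h < real d * H + 1"
  shows "real ((h + d) choose d) \<le> real d ^ d / fact d * (H + 1 / 2 * (1 + 3 / real d)) ^ d"
proof -
  have "(\<Prod>i<d. real h + 1 + real i) \<le> (real h + 1 + (real d - 1) / 2) ^ d"
    by (rule prod_shifted_le_power) simp
  also have "\<dots> \<le> (real d * H + (real d + 3) / 2) ^ d"
    using assms by (intro power_mono) (simp_all add: field_simps)
  also have "real d * H + (real d + 3) / 2 = real d * (H + 1 / 2 * (1 + 3 / real d))"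
    using assms by (simp add: field_simps)
  finally show ?thesis
    unfolding binomial_eq_prod_div_fact by (simp add: power_mult_distrib divide_right_mono)
qed

theorem mainTheorem4:
  fixes d :: nat and \<epsilon> :: real
  assumes "d \<ge> 1" and "0 < \<epsilon>" and "\<epsilon> < 1"
  shows "int (thiemard_height d \<epsilon>)
           \<le> \<lceil>real d * (1 / \<epsilon> - 1) / thiemard_f d \<epsilon>\<rceil>
       \<and> int (thiemard_height d \<epsilon>)
           \<le> \<lceil>real d * (1 / \<epsilon> - 1) / (1 + (real d - 1) / (2 * real d) * \<epsilon>)\<rceil>
       \<and> finite (thiemard_leaves d \<epsilon>)
       \<and> (d = 2 \<longrightarrow> real (card (thiemard_leaves d \<epsilon>))
              \<le> 2 * ((1 / \<epsilon> - 1) / thiemard_f d \<epsilon> + 3 / 2)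
                  * ((1 / \<epsilon> - 1) / thiemard_f d \<epsilon> + 1))
       \<and> (d \<ge> 3 \<longrightarrow> real (card (thiemard_leaves d \<epsilon>))
              \<le> real d ^ d / fact d
                 * ((1 / \<epsilon> - 1) / thiemard_f d \<epsilon> + 1 / 2 * (1 + 3 / real d)) ^ d)"
proof -
  define h where "h = thiemard_height d \<epsilon>"
  define H where "H = (1 / \<epsilon> - 1) / thiemard_f d \<epsilon>"
  have h_lt: "real h < real d * H + 1"
    using thiemard_height_lt[OF assms] by (simp add: h_def H_def)
  have card: "real (card (thiemard_leaves d \<epsilon>)) \<le> real ((h + d) choose d)"
    using card_thiemard_leaves_le(2)[OF assms] by (simp add: h_def)
  have "d = 2 \<longrightarrow> real (card (thiemard_leaves d \<epsilon>)) \<le> 2 * (H + 3 / 2) * (H + 1)"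
    using card binomial_two_le[of h H] h_lt by auto
  moreover have "real (card (thiemard_leaves d \<epsilon>)) \<le> real d ^ d / fact d * (H + 1 / 2 * (1 + 3 / real d)) ^ d"
    using card binomial_le_power[OF assms(1) h_lt] by linarith
  ultimately show ?thesis
    using thiemard_height_le_ceiling[OF assms] card_thiemard_leaves_le(1)[OF assms]
    by (simp add: H_def)
qed

end
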